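(* Let $0\le p<1$, let $n,k$ be integers with $1\le k\le n$, and let $\mathcal C_0\subseteq\{0,1\}^n$ be a binary linear maximum distance separable (MDS) code of length $n$ and dimension $n-k$. Consider the coset wiretap coding scheme in which the $2^k$ messages $m\in\mathcal M$ (with $M$ uniform on $\mathcal M$, $|\mathcal M|=2^k$) are put in bijection with the $2^k$ cosets $\mathcal C_0(\mathbf m)$ of $\mathcal C_0$ in $\{0,1\}^n$, and to send message $m$ the encoder transmits a codeword $\mathbf X$ chosen uniformly at random from the coset $\mathcal C_0(\mathbf m)$. Let $\mathbf Z\in\{0,1,2\}^n$ be the eavesdropper's output when $\mathbf X$ is sent over $n$ independent uses of a binary erasure channel with erasure probability $p$. Then \[ d_{TV}\bigl(P_{M,\mathbf Z},\,\mathrm U_{\mathcal M}P_{\mathbf Z}\bigr)\;=\;\sum_{e=0}^{k-1}\Bigl(1-\frac{1}{2^{\,k-e}}\Bigr)\binom{n}{e}p^e(1-p)^{n-e}. \]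
   Context: The binary erasure channel with erasure probability $p$ maps input $x\in\{0,1\}$ to output $x$ with probability $1-p$ and to the erasure symbol $2$ with probability $p$, independently across the $n$ uses. An $[n,n-k]$ linear code is MDS if its minimum Hamming distance equals $k+1$. $d_{TV}(P,Q)=\tfrac12\sum_x|P(x)-Q(x)|$ denotes total variation distance, and $\mathrm U_{\mathcal M}$ is the uniform distribution on $\mathcal M$. *)

theory Defs
  imports Complex_Main
begin

text \<open>Binary words of length n are lists over {0,1}; channel outputs are lists over {0,1,2}
  (2 = erasure symbol).\<close>

definition bin_words :: "nat \<Rightarrow> nat list set" where
  "bin_words n = {x. length x = n \<and> set x \<subseteq> {0,1}}"

definition out_words :: "nat \<Rightarrow> nat list set" where
  "out_words n = {z. length z = n \<and> set z \<subseteq> {0,1,2}}"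

definition vadd :: "nat list \<Rightarrow> nat list \<Rightarrow> nat list" where
  "vadd x y = map2 (\<lambda>a b. (a + b) mod 2) x y"

definition hamming :: "nat list \<Rightarrow> nat list \<Rightarrow> nat" where
  "hamming x y = card {i. i < length x \<and> x ! i \<noteq> y ! i}"

definition binary_linear_code :: "nat \<Rightarrow> nat list set \<Rightarrow> bool" where
  "binary_linear_code n C \<longleftrightarrow> C \<subseteq> bin_words n \<and> replicate n 0 \<in> C \<and>
     (\<forall>x\<in>C. \<forall>y\<in>C. vadd x y \<in> C)"

definition code_dim :: "nat list set \<Rightarrow> nat \<Rightarrow> bool" where
  "code_dim C d \<longleftrightarrow> card C = 2 ^ d"

text \<open>Minimum Hamming distance; for the trivial code {0} we use the standard
  convention n+1 (so that the [n,0] code is MDS).\<close>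
definition min_dist :: "nat \<Rightarrow> nat list set \<Rightarrow> nat" where
  "min_dist n C = Min ({hamming x y | x y. x \<in> C \<and> y \<in> C \<and> x \<noteq> y} \<union> {n + 1})"

definition coset :: "nat list set \<Rightarrow> nat list \<Rightarrow> nat list set" where
  "coset C a = vadd a ` C"

definition cosets :: "nat \<Rightarrow> nat list set \<Rightarrow> nat list set set" where
  "cosets n C = coset C ` bin_words n"

definition bec :: "real \<Rightarrow> nat \<Rightarrow> nat list \<Rightarrow> nat list \<Rightarrow> real" where
  "bec p n x z = (\<Prod>i<n. if z ! i = 2 then p else if z ! i = x ! i then 1 - p else 0)"

definition joint_MZ :: "real \<Rightarrow> nat \<Rightarrow> nat list set \<Rightarrow> 'm set \<Rightarrow> ('m \<Rightarrow> nat list set)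
    \<Rightarrow> 'm \<Rightarrow> nat list \<Rightarrow> real" where
  "joint_MZ p n C msgs enc m z =
     (1 / real (card msgs)) * (\<Sum>x\<in>enc m. (1 / real (card (enc m))) * bec p n x z)"

definition marg_Z :: "real \<Rightarrow> nat \<Rightarrow> nat list set \<Rightarrow> 'm set \<Rightarrow> ('m \<Rightarrow> nat list set)
    \<Rightarrow> nat list \<Rightarrow> real" where
  "marg_Z p n C msgs enc z = (\<Sum>m\<in>msgs. joint_MZ p n C msgs enc m z)"

definition tv_leak :: "real \<Rightarrow> nat \<Rightarrow> nat list set \<Rightarrow> 'm set \<Rightarrow> ('m \<Rightarrow> nat list set) \<Rightarrow> real" where
  "tv_leak p n C msgs enc =
     (1/2) * (\<Sum>m\<in>msgs. \<Sum>z\<in>out_words n.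
        \<bar>joint_MZ p n C msgs enc m z - (1 / real (card msgs)) * marg_Z p n C msgs enc z\<bar>)"

end

theory Submission
  imports Defs
begin

text \<open>
  Fix an output word z with e erasures. Given z, the channel factor p^e (1-p)^(n-e) is the same
  for every input consistent with z, so the leakage at z is governed by how many words of each
  coset are consistent with z. Two distinct words of a coset differ in at least k+1 positions.
  If e < k, each coset therefore contains at most one of the 2^e consistent words, and the
  messages split into 2^e ``possible'' and 2^k - 2^e ``impossible'' ones, which contributes the
  factor 1 - 2^e/2^k. If e \<ge> k, zeroing k of the erased positions maps every coset bijectively
  onto the same set of words, so all cosets contain equally many consistent words and z reveals
  nothing. Grouping the outputs by e yields the binomial sum.
\<close>

section \<open>Binary words\<close>

lemma card_lists_nth:
  "card {xs. length xs = n \<and> (\<forall>i<n. xs!i \<in> A i)} = (\<Prod>i<n. card (A i))"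
proof (induction n)
  case 0
  then show ?case by simp
next
  case (Suc n)
  let ?S = "{xs. length xs = n \<and> (\<forall>i<n. xs!i \<in> A i)}"
  have eq: "{xs. length xs = Suc n \<and> (\<forall>i<Suc n. xs!i \<in> A i)} = (\<lambda>(xs,a). xs@[a]) ` (?S \<times> A n)"
  proof (rule set_eqI, rule iffI)
    fix xs assume "xs \<in> {xs. length xs = Suc n \<and> (\<forall>i<Suc n. xs!i \<in> A i)}"
    then obtain y ys where xs: "xs = ys @ [y]" "length ys = n" and h: "\<forall>i<Suc n. xs!i \<in> A i"
      by (auto simp: length_Suc_conv_rev)
    have "\<forall>i<n. ys!i \<in> A i" using h xs by (metis less_Suc_eq nth_append_left)
    moreover have "y \<in> A n" using h xs by (metis lessI nth_append_length)
    ultimately show "xs \<in> (\<lambda>(xs,a). xs@[a]) ` (?S \<times> A n)" using xs by force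
  qed (auto simp: nth_append less_Suc_eq)
  have inj: "inj_on (\<lambda>(xs,a). xs@[a]) (?S \<times> A n)"
    by (auto simp: inj_on_def)
  show ?case unfolding eq card_image[OF inj] card_cartesian_product Suc.IH by simp
qed

lemma bin_words_conv_nth: "bin_words n = {xs. length xs = n \<and> (\<forall>i<n. xs!i \<in> {0,1})}"
  unfolding bin_words_def by (auto simp: set_conv_nth)

lemma length_bin_words: "x \<in> bin_words n \<Longrightarrow> length x = n"
  by (simp add: bin_words_def)

lemma nth_bin_words: "x \<in> bin_words n \<Longrightarrow> i < n \<Longrightarrow> x!i = 0 \<or> x!i = 1"
  by (auto simp: bin_words_conv_nth)

lemma finite_bin_words: "finite (bin_words n)"
  unfolding bin_words_def using finite_lists_length_eq[of "{0::nat,1}" n] by (simp add: conj_commute)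

lemma card_bin_words_fixed_on:
  assumes "S \<subseteq> {..<n}" "\<forall>i\<in>S. w!i \<in> {0,1}"
  shows "card {x\<in>bin_words n. \<forall>i\<in>S. x!i = w!i} = 2 ^ (n - card S)"
proof -
  have "{x\<in>bin_words n. \<forall>i\<in>S. x!i = w!i} =
     {xs. length xs = n \<and> (\<forall>i<n. xs!i \<in> (if i \<in> S then {w!i} else {0,1}))}"
    using assms unfolding bin_words_conv_nth by (auto split: if_splits) (metis subsetD lessThan_iff)
  hence "card {x\<in>bin_words n. \<forall>i\<in>S. x!i = w!i} = (\<Prod>i<n. card (if i \<in> S then {w!i} else {0::nat,1}))"
    by (simp add: card_lists_nth)
  also have "\<dots> = (\<Prod>i<n. if i \<in> S then 1 else 2)"
    by (rule prod.cong) auto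
  also have "\<dots> = (\<Prod>i\<in>{..<n} \<inter> S. 1) * (\<Prod>i\<in>{..<n} - S. 2)"
    by (simp add: prod.If_cases Diff_eq)
  also have "\<dots> = (2::nat) ^ (n - card S)"
    using assms(1) by (simp add: card_Diff_subset finite_subset)
  finally show ?thesis .
qed

lemma hamming_le_card:
  assumes "length x = n" "finite W" "\<forall>i<n. i \<notin> W \<longrightarrow> x!i = y!i"
  shows "hamming x y \<le> card W"
  unfolding hamming_def using assms by (intro card_mono) auto

lemma min_dist_le_hamming:
  assumes "finite C" "x \<in> C" "y \<in> C" "x \<noteq> y"
  shows "min_dist n C \<le> hamming x y"
proof -
  have "{hamming x y | x y. x \<in> C \<and> y \<in> C \<and> x \<noteq> y} \<subseteq> (\<lambda>(x,y). hamming x y) ` (C \<times> C)"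
    by auto
  then have "finite {hamming x y | x y. x \<in> C \<and> y \<in> C \<and> x \<noteq> y}"
    by (rule finite_subset) (use assms(1) in simp)
  then have "finite ({hamming x y | x y. x \<in> C \<and> y \<in> C \<and> x \<noteq> y} \<union> {n + 1})"
    by simp
  then show ?thesis unfolding min_dist_def
    by (rule Min_le) (use assms in auto)
qed

section \<open>Cosets of a binary linear code\<close>

lemma length_vadd [simp]: "length (vadd x y) = min (length x) (length y)"
  by (simp add: vadd_def)

lemma nth_vadd: "i < length x \<Longrightarrow> i < length y \<Longrightarrow> vadd x y ! i = (x!i + y!i) mod 2"
  by (simp add: vadd_def)

lemma vadd_bin_words: "x \<in> bin_words n \<Longrightarrow> y \<in> bin_words n \<Longrightarrow> vadd x y \<in> bin_words n"
  unfolding bin_words_conv_nth by (auto simp: nth_vadd)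

lemma hamming_vadd_left:
  assumes "a \<in> bin_words n" "x \<in> bin_words n" "y \<in> bin_words n"
  shows "hamming (vadd a x) (vadd a y) = hamming x y"
proof -
  have "(vadd a x ! i \<noteq> vadd a y ! i) = (x!i \<noteq> y!i)" if "i < n" for i
    using nth_bin_words[OF assms(1) that] nth_bin_words[OF assms(2) that] nth_bin_words[OF assms(3) that]
      assms that by (auto simp: nth_vadd length_bin_words)
  then have "{i. i < n \<and> vadd a x ! i \<noteq> vadd a y ! i} = {i. i < n \<and> x!i \<noteq> y!i}"
    by blast
  then show ?thesis
    using assms unfolding hamming_def by (simp add: length_bin_words)
qed

lemma linear_code_subset_bin_words: "binary_linear_code n C \<Longrightarrow> C \<subseteq> bin_words n"
  by (simp add: binary_linear_code_def)

lemma finite_linear_code: "binary_linear_code n C \<Longrightarrow> finite C"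
  using finite_subset[OF linear_code_subset_bin_words finite_bin_words] .

lemma coset_subset_bin_words:
  assumes "binary_linear_code n C" "a \<in> bin_words n"
  shows "coset C a \<subseteq> bin_words n"
  using assms linear_code_subset_bin_words by (auto simp: coset_def intro!: vadd_bin_words)

lemma inj_on_vadd:
  assumes "a \<in> bin_words n" "C \<subseteq> bin_words n"
  shows "inj_on (vadd a) C"
proof
  fix x y assume xy: "x \<in> C" "y \<in> C" "vadd a x = vadd a y"
  have bw: "x \<in> bin_words n" "y \<in> bin_words n" using xy assms by auto
  show "x = y"
  proof (rule nth_equalityI)
    show "length x = length y" using bw by (simp add: length_bin_words)
    fix i assume "i < length x"
    hence i: "i < n" using bw by (simp add: length_bin_words)
    have "(a!i + x!i) mod 2 = (a!i + y!i) mod 2"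
      using arg_cong[OF xy(3), of "\<lambda>v. v ! i"] bw assms(1) i by (simp add: nth_vadd length_bin_words)
    then show "x!i = y!i" using nth_bin_words[OF bw(1) i] nth_bin_words[OF bw(2) i] nth_bin_words[OF assms(1) i]
      by auto
  qed
qed

lemma card_coset:
  assumes "binary_linear_code n C" "a \<in> bin_words n"
  shows "card (coset C a) = card C"
  unfolding coset_def using card_image[OF inj_on_vadd[OF assms(2) linear_code_subset_bin_words[OF assms(1)]]] .

lemma mem_coset_self:
  assumes "binary_linear_code n C" "a \<in> bin_words n"
  shows "a \<in> coset C a"
proof -
  have "vadd a (replicate n 0) = a" using assms(2)
    by (intro nth_equalityI) (auto simp: length_bin_words nth_vadd dest: nth_bin_words)
  moreover have "replicate n 0 \<in> C" using assms(1) by (simp add: binary_linear_code_def)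
  ultimately show ?thesis unfolding coset_def by force
qed

lemma min_dist_le_hamming_coset:
  assumes "binary_linear_code n C" "a \<in> bin_words n"
    and "x \<in> coset C a" "y \<in> coset C a" "x \<noteq> y"
  shows "min_dist n C \<le> hamming x y"
proof -
  obtain c1 c2 where c: "c1 \<in> C" "c2 \<in> C" "x = vadd a c1" "y = vadd a c2"
    using assms(3,4) by (auto simp: coset_def)
  have "c1 \<noteq> c2" using c assms(5) by auto
  then have "min_dist n C \<le> hamming c1 c2"
    using min_dist_le_hamming[OF finite_linear_code[OF assms(1)]] c by blast
  also have "hamming c1 c2 = hamming x y"
  proof -
    have "c1 \<in> bin_words n" "c2 \<in> bin_words n" using c linear_code_subset_bin_words[OF assms(1)] by auto
    then show ?thesis using hamming_vadd_left[OF assms(2)] c by simp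
  qed
  finally show ?thesis .
qed

lemma coset_subset_if_common:
  assumes "binary_linear_code n C" "a \<in> bin_words n" "b \<in> bin_words n"
    and "x \<in> coset C a" "x \<in> coset C b"
  shows "coset C a \<subseteq> coset C b"
proof
  fix y assume "y \<in> coset C a"
  then obtain c where c: "c \<in> C" "y = vadd a c" by (auto simp: coset_def)
  obtain c1 c2 where c12: "c1 \<in> C" "c2 \<in> C" "x = vadd a c1" "x = vadd b c2"
    using assms(4,5) by (auto simp: coset_def)
  have closed: "\<forall>u\<in>C. \<forall>v\<in>C. vadd u v \<in> C" and sub: "C \<subseteq> bin_words n"
    using assms(1) by (auto simp: binary_linear_code_def)
  let ?d = "vadd c2 (vadd c1 c)"
  have d: "?d \<in> C" using closed c c12 by blast
  have bw: "c \<in> bin_words n" "c1 \<in> bin_words n" "c2 \<in> bin_words n" using sub c c12 by auto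
  have "y = vadd b ?d"
  proof (rule nth_equalityI)
    show "length y = length (vadd b ?d)" using c bw assms by (simp add: length_bin_words)
    fix i assume "i < length y"
    hence i: "i < n" using c bw assms by (simp add: length_bin_words)
    have "(a!i + c1!i) mod 2 = (b!i + c2!i) mod 2"
      using arg_cong[OF trans[OF c12(3)[symmetric] c12(4)], of "\<lambda>v. v ! i"] bw assms i
      by (simp add: nth_vadd length_bin_words)
    then show "y!i = vadd b ?d ! i"
      using nth_bin_words[OF bw(1) i] nth_bin_words[OF bw(2) i] nth_bin_words[OF bw(3) i]
        nth_bin_words[OF assms(2) i] nth_bin_words[OF assms(3) i] c bw assms i
      by (auto simp: nth_vadd length_bin_words)
  qed
  then show "y \<in> coset C b" using d by (auto simp: coset_def)
qed

lemma coset_eq_if_common: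
  assumes "binary_linear_code n C" "a \<in> bin_words n" "b \<in> bin_words n"
    and "x \<in> coset C a" "x \<in> coset C b"
  shows "coset C a = coset C b"
  using coset_subset_if_common[OF assms] coset_subset_if_common[OF assms(1,3,2,5,4)] by blast

section \<open>Erasure patterns\<close>

definition consistent :: "nat list \<Rightarrow> nat list \<Rightarrow> bool" where
  "consistent z x \<longleftrightarrow> (\<forall>i<length z. z!i \<noteq> 2 \<longrightarrow> x!i = z!i)"

lemma count_list_conv_card: "count_list z a = card {i. i < length z \<and> z!i = a}"
  unfolding count_list_eq_length_filter length_filter_conv_card by (metis)

lemma out_words_Suc: "out_words (Suc n) = (\<lambda>(a,z). a#z) ` ({0,1,2} \<times> out_words n)"
  unfolding out_words_def by (auto simp: length_Suc_conv)

lemma sum_out_words_count_list: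
  fixes g :: "nat \<Rightarrow> real"
  shows "(\<Sum>z\<in>out_words n. g (count_list z 2)) = (\<Sum>e\<le>n. real (n choose e) * 2^(n-e) * g e)"
proof (induction n arbitrary: g)
  case 0
  have "out_words 0 = {[]}" by (auto simp: out_words_def)
  then show ?case by simp
next
  case (Suc n)
  have inj: "inj_on (\<lambda>(a,z). a#z) ({0::nat,1,2} \<times> out_words n)" by (auto simp: inj_on_def)
  have "(\<Sum>z\<in>out_words (Suc n). g (count_list z 2))
      = (\<Sum>a\<in>{0::nat,1,2}. \<Sum>z\<in>out_words n. g (count_list (a#z) 2))"
    unfolding out_words_Suc sum.reindex[OF inj] sum.cartesian_product by (simp add: case_prod_beta')
  also have "\<dots> = (\<Sum>z\<in>out_words n. 2 * g (count_list z 2) + g (Suc (count_list z 2)))"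
    by (simp add: sum.distrib sum_distrib_left)
  also have "\<dots> = (\<Sum>e\<le>n. real (n choose e) * 2^(n-e) * (2 * g e + g (Suc e)))"
    using Suc.IH[of "\<lambda>e. 2 * g e + g (Suc e)"] by simp
  also have "\<dots> = (\<Sum>e\<le>n. real (n choose e) * 2^(Suc n-e) * g e)
       + (\<Sum>e\<le>n. real (n choose e) * 2^(n-e) * g (Suc e))"
    by (simp add: sum.distrib algebra_simps Suc_diff_le)
  also have "(\<Sum>e\<le>n. real (n choose e) * 2^(Suc n-e) * g e)
     = 2^Suc n * g 0 + (\<Sum>e\<le>n. real (n choose Suc e) * 2^(n-e) * g (Suc e))"
    by (subst sum.atMost_shift) (simp add: lessThan_Suc_atMost[symmetric])
  also have "2^Suc n * g 0 + (\<Sum>e\<le>n. real (n choose Suc e) * 2^(n-e) * g (Suc e))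
     + (\<Sum>e\<le>n. real (n choose e) * 2^(n-e) * g (Suc e))
     = (\<Sum>e\<le>Suc n. real (Suc n choose e) * 2^(Suc n-e) * g e)"
    by (subst sum.atMost_Suc_shift) (simp add: sum.distrib algebra_simps)
  finally show ?case .
qed

lemma bec_out_word:
  assumes "z \<in> out_words n"
  shows "bec p n x z = (if consistent z x then p ^ count_list z 2 * (1-p) ^ (n - count_list z 2) else 0)"
proof -
  have lz: "length z = n" using assms by (simp add: out_words_def)
  define E where "E = {i. i < n \<and> z!i = 2}"
  have E: "E \<subseteq> {..<n}" by (auto simp: E_def)
  have cE: "count_list z 2 = card E" unfolding count_list_conv_card E_def lz ..
  show ?thesis
  proof (cases "consistent z x")
    case True
    have "bec p n x z = (\<Prod>i<n. if z!i = 2 then p else 1-p)"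
      unfolding bec_def using True lz by (intro prod.cong) (auto simp: consistent_def)
    also have "\<dots> = (\<Prod>i\<in>{..<n} \<inter> {i. z!i = 2}. p) * (\<Prod>i\<in>{..<n} \<inter> - {i. z!i = 2}. 1-p)"
      by (rule prod.If_cases) simp
    also have "{..<n} \<inter> {i. z!i = 2} = E" by (auto simp: E_def)
    also have "{..<n} \<inter> - {i. z!i = 2} = {..<n} - E" by (auto simp: E_def)
    also have "(\<Prod>i\<in>E. p) * (\<Prod>i\<in>{..<n} - E. 1-p) = p ^ count_list z 2 * (1-p) ^ (n - count_list z 2)"
      using E by (simp add: cE card_Diff_subset finite_subset)
    finally show ?thesis using True by simp
  next
    case False
    then obtain i where i: "i < n" "z!i \<noteq> 2" "x!i \<noteq> z!i" using lz by (auto simp: consistent_def)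
    have "bec p n x z = 0" unfolding bec_def
      by (rule prod_zero[OF finite_lessThan], rule bexI[of _ i]) (use i in auto)
    then show ?thesis using False by simp
  qed
qed

lemma card_consistent_bin_words:
  assumes "z \<in> out_words n"
  shows "card {x\<in>bin_words n. consistent z x} = 2 ^ count_list z 2"
proof -
  have lz: "length z = n" using assms by (simp add: out_words_def)
  let ?U = "{i. i < n \<and> z!i \<noteq> 2}"
  have "?U = {..<n} - {i. i < n \<and> z!i = 2}" "{i. i < n \<and> z!i = 2} \<subseteq> {..<n}" by auto
  then have cU: "card ?U = n - count_list z 2"
    by (simp add: card_Diff_subset finite_subset count_list_conv_card lz)
  have "card {x\<in>bin_words n. consistent z x} = card {x\<in>bin_words n. \<forall>i\<in>?U. x!i = z!i}"
    using lz by (auto simp: consistent_def intro!: arg_cong[where f=card])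
  also have "\<dots> = 2 ^ (n - card ?U)"
    by (rule card_bin_words_fixed_on) (use assms in \<open>auto simp: out_words_def set_conv_nth\<close>)
  also have "n - card ?U = count_list z 2"
    using cU count_le_length[of z 2] lz by simp
  finally show ?thesis .
qed

section \<open>Consistent words in the cosets of an MDS code\<close>

lemma card_consistent_coset_le_1:
  assumes code: "binary_linear_code n C" and a: "a \<in> bin_words n" and z: "z \<in> out_words n"
    and few: "count_list z 2 < min_dist n C"
  shows "card {x\<in>coset C a. consistent z x} \<le> 1"
proof -
  have lz: "length z = n" using z by (simp add: out_words_def)
  have fin: "finite {x\<in>coset C a. consistent z x}"
    using coset_subset_bin_words[OF code a] finite_bin_words by (auto intro: finite_subset)
  have "x = y" if xy: "x \<in> coset C a" "y \<in> coset C a" "consistent z x" "consistent z y" for x y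
  proof (rule ccontr)
    assume ne: "x \<noteq> y"
    have "length x = n" using xy coset_subset_bin_words[OF code a] length_bin_words by auto
    moreover have "\<forall>i<n. i \<notin> {i. i < n \<and> z!i = 2} \<longrightarrow> x!i = y!i"
      using xy(3,4) lz by (auto simp: consistent_def)
    ultimately have "hamming x y \<le> count_list z 2"
      using hamming_le_card[of x n "{i. i < n \<and> z!i = 2}" y] by (simp add: count_list_conv_card lz)
    moreover have "min_dist n C \<le> hamming x y" using min_dist_le_hamming_coset[OF code a] xy ne by auto
    ultimately show False using few by simp
  qed
  then show ?thesis using fin by (auto simp: card_le_Suc0_iff_eq)
qed

definition zero_on :: "nat set \<Rightarrow> nat list \<Rightarrow> nat list" where
  "zero_on W x = map (\<lambda>i. if i \<in> W then 0 else x!i) [0..<length x]"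

lemma length_zero_on [simp]: "length (zero_on W x) = length x"
  by (simp add: zero_on_def)

lemma nth_zero_on: "i < length x \<Longrightarrow> zero_on W x ! i = (if i \<in> W then 0 else x!i)"
  by (simp add: zero_on_def)

lemma inj_on_zero_on_coset:
  assumes code: "binary_linear_code n C" and a: "a \<in> bin_words n"
    and W: "finite W" "card W < min_dist n C"
  shows "inj_on (zero_on W) (coset C a)"
proof
  fix x y assume xy: "x \<in> coset C a" "y \<in> coset C a" "zero_on W x = zero_on W y"
  have len: "length x = n" "length y = n"
    using xy(1,2) coset_subset_bin_words[OF code a] length_bin_words by auto
  show "x = y"
  proof (rule ccontr)
    assume "x \<noteq> y"
    then have "min_dist n C \<le> hamming x y" using min_dist_le_hamming_coset[OF code a] xy by blast
    moreover have "\<forall>i<n. i \<notin> W \<longrightarrow> x!i = y!i"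
    proof (intro allI impI)
      fix i assume "i < n" "i \<notin> W"
      then show "x!i = y!i" using arg_cong[OF xy(3), of "\<lambda>v. v ! i"] len by (simp add: nth_zero_on)
    qed
    then have "hamming x y \<le> card W" using hamming_le_card[OF len(1) W(1)] by blast
    ultimately show False using W(2) by simp
  qed
qed

lemma card_consistent_coset_eq_zeroed:
  assumes code: "binary_linear_code n C" and a: "a \<in> bin_words n" and z: "z \<in> out_words n"
    and W: "W \<subseteq> {i. i < n \<and> z!i = 2}" "card W < min_dist n C"
    and cC: "card C = 2 ^ (n - card W)"
  shows "card {x\<in>coset C a. consistent z x} = card {y\<in>bin_words n. (\<forall>i\<in>W. y!i = 0) \<and> consistent z y}"
proof -
  define Z where "Z = {y\<in>bin_words n. \<forall>i\<in>W. y!i = 0}"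
  have D: "coset C a \<subseteq> bin_words n" using coset_subset_bin_words[OF code a] .
  have Wn: "W \<subseteq> {..<n}" and finW: "finite W" using W(1) finite_subset[of W "{..<n}"] by auto
  have inj: "inj_on (zero_on W) (coset C a)"
    using inj_on_zero_on_coset[OF code a finW W(2)] .
  have "zero_on W x \<in> Z" if "x \<in> coset C a" for x
  proof -
    have "x \<in> bin_words n" using that D by auto
    then show ?thesis using Wn by (auto simp: Z_def bin_words_conv_nth nth_zero_on)
  qed
  then have sub: "zero_on W ` coset C a \<subseteq> Z" by auto
  have "card Z = 2 ^ (n - card W)"
  proof -
    have "Z = {x\<in>bin_words n. \<forall>i\<in>W. x!i = replicate n 0 ! i}" using Wn by (auto simp: Z_def)
    moreover have "card {x\<in>bin_words n. \<forall>i\<in>W. x!i = replicate n 0 ! i} = 2 ^ (n - card W)"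
      by (rule card_bin_words_fixed_on[OF Wn]) (use Wn in auto)
    ultimately show ?thesis by simp
  qed
  moreover have "card (zero_on W ` coset C a) = 2 ^ (n - card W)"
    using card_image[OF inj] cC card_coset[OF code a] by simp
  ultimately have onto: "zero_on W ` coset C a = Z"
    using card_subset_eq[OF _ sub] finite_bin_words by (simp add: Z_def)
  have "consistent z (zero_on W x) = consistent z x" if "x \<in> coset C a" for x
  proof -
    have "length x = length z" using that D z by (simp add: length_bin_words out_words_def subset_iff)
    then show ?thesis using W(1) by (auto simp: consistent_def nth_zero_on)
  qed
  then have "zero_on W ` {x\<in>coset C a. consistent z x} = {y\<in>Z. consistent z y}"
    using onto by auto
  moreover have "card (zero_on W ` {x\<in>coset C a. consistent z x}) = card {x\<in>coset C a. consistent z x}"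
    by (rule card_image) (rule inj_on_subset[OF inj], auto)
  ultimately show ?thesis by (simp add: Z_def conj_assoc)
qed

lemma card_consistent_coset_indep:
  assumes code: "binary_linear_code n C" and mds: "min_dist n C = k + 1"
    and cC: "card C = 2 ^ (n - k)"
    and a: "a \<in> bin_words n" and b: "b \<in> bin_words n" and z: "z \<in> out_words n"
    and many: "k \<le> count_list z 2"
  shows "card {x\<in>coset C a. consistent z x} = card {x\<in>coset C b. consistent z x}"
proof -
  have "length z = n" using z by (simp add: out_words_def)
  then obtain W where W: "W \<subseteq> {i. i < n \<and> z!i = 2}" "card W = k"
    using obtain_subset_with_card_n[of k "{i. i < n \<and> z!i = 2}"] many
    by (auto simp: count_list_conv_card)
  have small: "card W < min_dist n C" and cW: "card C = 2 ^ (n - card W)" using W(2) mds cC by simp_all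
  show ?thesis
    using card_consistent_coset_eq_zeroed[OF code a z W(1) small cW]
      card_consistent_coset_eq_zeroed[OF code b z W(1) small cW] by simp
qed

lemma sum_abs_dev_indicator:
  fixes N :: "'a \<Rightarrow> real"
  assumes fin: "finite M" and N01: "\<forall>m\<in>M. N m = 0 \<or> N m = 1" and "M \<noteq> {}"
  shows "(\<Sum>m\<in>M. \<bar>N m - sum N M / card M\<bar>) = 2 * sum N M * (1 - sum N M / card M)"
proof -
  define M1 where "M1 = {m\<in>M. N m = 1}"
  define T where "T = sum N M"
  have K: "real (card M) > 0" using fin assms(3) by (simp add: card_gt_0_iff)
  have M1: "M1 \<subseteq> M" "finite M1" using fin by (auto simp: M1_def)
  have "T = (\<Sum>m\<in>M. if N m = 1 then 1 else 0)"
    unfolding T_def by (rule sum.cong) (use N01 in auto)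
  then have T: "T = real (card M1)" by (simp add: sum.If_cases fin M1_def Int_def)
  have cle: "card M1 \<le> card M" using card_mono[OF fin M1(1)] .
  have "(\<Sum>m\<in>M. \<bar>N m - T / card M\<bar>) = (\<Sum>m\<in>M. if N m = 1 then 1 - T / card M else T / card M)"
    by (rule sum.cong) (use N01 K T cle in \<open>auto simp: field_simps\<close>)
  also have "\<dots> = (\<Sum>m\<in>M \<inter> {m. N m = 1}. 1 - T / card M) + (\<Sum>m\<in>M \<inter> - {m. N m = 1}. T / card M)"
    by (rule sum.If_cases[OF fin])
  also have "M \<inter> {m. N m = 1} = M1" by (auto simp: M1_def)
  also have "M \<inter> - {m. N m = 1} = M - M1" by (auto simp: M1_def)
  also have "(\<Sum>m\<in>M1. 1 - T / card M) + (\<Sum>m\<in>M - M1. T / card M)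
      = real (card M1) * (1 - T / card M) + real (card (M - M1)) * (T / card M)"
    by simp
  also have "\<dots> = 2 * T * (1 - T / card M)"
    using T K cle card_Diff_subset[OF M1(2,1)] by (simp add: of_nat_diff field_simps)
  finally show ?thesis unfolding T_def .
qed

section \<open>The coset coding scheme\<close>

locale coset_scheme =
  fixes n :: nat and C :: "nat list set" and msgs :: "'m set" and enc :: "'m \<Rightarrow> nat list set"
  assumes code: "binary_linear_code n C"
    and finite_msgs: "finite msgs"
    and enc_bij: "bij_betw enc msgs (cosets n C)"
begin

definition consistent_count :: "'m \<Rightarrow> nat list \<Rightarrow> nat" where
  "consistent_count m z = card {x\<in>enc m. consistent z x}"

lemma enc_coset:
  assumes "m \<in> msgs"
  obtains a where "a \<in> bin_words n" "enc m = coset C a"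
proof -
  have "enc m \<in> coset C ` bin_words n" using assms enc_bij by (auto simp: bij_betw_def cosets_def)
  then show ?thesis using that by blast
qed

lemma enc_subset_bin_words: "m \<in> msgs \<Longrightarrow> enc m \<subseteq> bin_words n"
  by (metis enc_coset coset_subset_bin_words[OF code])

lemma finite_enc: "m \<in> msgs \<Longrightarrow> finite (enc m)"
  using enc_subset_bin_words finite_bin_words by (auto intro: finite_subset)

lemma card_enc: "m \<in> msgs \<Longrightarrow> card (enc m) = card C"
  by (metis enc_coset card_coset[OF code])

lemma msgs_nonempty: "msgs \<noteq> {}"
proof -
  have "replicate n 0 \<in> bin_words n" by (simp add: bin_words_def set_replicate_conv_if)
  then show ?thesis using enc_bij by (auto simp: bij_betw_def cosets_def)
qed

lemma sum_consistent_count: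
  assumes z: "z \<in> out_words n"
  shows "(\<Sum>m\<in>msgs. consistent_count m z) = 2 ^ count_list z 2"
proof -
  define A where "A m = {x\<in>enc m. consistent z x}" for m
  have disj: "A i \<inter> A j = {}" if ij: "i \<in> msgs" "j \<in> msgs" "i \<noteq> j" for i j
  proof (rule ccontr)
    obtain a b where ab: "a \<in> bin_words n" "enc i = coset C a" "b \<in> bin_words n" "enc j = coset C b"
      using enc_coset ij by metis
    assume "A i \<inter> A j \<noteq> {}"
    then obtain x where "x \<in> coset C a" "x \<in> coset C b" using ab by (auto simp: A_def)
    then have "enc i = enc j" using ab coset_eq_if_common[OF code ab(1,3)] by simp
    then show False using enc_bij ij by (auto simp: bij_betw_def dest: inj_onD)
  qed
  have "(\<Union>m\<in>msgs. A m) = {x\<in>bin_words n. consistent z x}"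
  proof
    show "(\<Union>m\<in>msgs. A m) \<subseteq> {x\<in>bin_words n. consistent z x}"
      using enc_subset_bin_words by (auto simp: A_def)
    show "{x\<in>bin_words n. consistent z x} \<subseteq> (\<Union>m\<in>msgs. A m)"
    proof
      fix x assume x: "x \<in> {x\<in>bin_words n. consistent z x}"
      then have "coset C x \<in> enc ` msgs" using enc_bij by (auto simp: bij_betw_def cosets_def)
      then obtain m where "m \<in> msgs" "enc m = coset C x" by auto
      then show "x \<in> (\<Union>m\<in>msgs. A m)" using mem_coset_self[OF code] x by (auto simp: A_def)
    qed
  qed
  then have "card (\<Union>m\<in>msgs. A m) = 2 ^ count_list z 2"
    using card_consistent_bin_words[OF z] by simp
  moreover have "card (\<Union>m\<in>msgs. A m) = (\<Sum>m\<in>msgs. card (A m))"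
    by (rule card_UN_disjoint[OF finite_msgs]) (use finite_enc disj in \<open>auto simp: A_def\<close>)
  ultimately show ?thesis by (simp add: A_def consistent_count_def)
qed

lemma joint_MZ_eq:
  assumes m: "m \<in> msgs" and z: "z \<in> out_words n"
  shows "joint_MZ p n C msgs enc m z
    = p ^ count_list z 2 * (1-p) ^ (n - count_list z 2) / (card msgs * card C) * consistent_count m z"
proof -
  let ?q = "p ^ count_list z 2 * (1-p) ^ (n - count_list z 2)"
  have "(\<Sum>x\<in>enc m. 1 / real (card (enc m)) * bec p n x z)
      = (\<Sum>x\<in>enc m. if consistent z x then ?q / card C else 0)"
    by (rule sum.cong) (auto simp: bec_out_word[OF z] card_enc[OF m])
  also have "\<dots> = ?q / card C * consistent_count m z"
    by (simp add: sum.inter_filter[symmetric, OF finite_enc[OF m]] consistent_count_def)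
  finally show ?thesis unfolding joint_MZ_def by simp
qed

lemma marg_Z_eq:
  assumes z: "z \<in> out_words n"
  shows "marg_Z p n C msgs enc z
    = p ^ count_list z 2 * (1-p) ^ (n - count_list z 2) / (card msgs * card C) * 2 ^ count_list z 2"
proof -
  let ?c = "p ^ count_list z 2 * (1-p) ^ (n - count_list z 2) / (card msgs * card C)"
  have "marg_Z p n C msgs enc z = (\<Sum>m\<in>msgs. ?c * consistent_count m z)"
    unfolding marg_Z_def by (rule sum.cong) (simp_all only: joint_MZ_eq[OF _ z])
  also have "\<dots> = ?c * (\<Sum>m\<in>msgs. consistent_count m z)"
    by (simp add: sum_distrib_left)
  finally show ?thesis by (simp only: sum_consistent_count[OF z] of_nat_numeral of_nat_power)
qed

lemma tv_leak_eq:
  assumes "0 \<le> p" "p \<le> 1"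
  shows "tv_leak p n C msgs enc = (\<Sum>z\<in>out_words n.
     p ^ count_list z 2 * (1-p) ^ (n - count_list z 2) / (card msgs * card C) / 2 *
     (\<Sum>m\<in>msgs. \<bar>consistent_count m z - 2 ^ count_list z 2 / card msgs\<bar>))"
proof -
  have "(\<Sum>m\<in>msgs. \<bar>joint_MZ p n C msgs enc m z - 1 / card msgs * marg_Z p n C msgs enc z\<bar>)
      = p ^ count_list z 2 * (1-p) ^ (n - count_list z 2) / (card msgs * card C) *
        (\<Sum>m\<in>msgs. \<bar>consistent_count m z - 2 ^ count_list z 2 / card msgs\<bar>)"
    if z: "z \<in> out_words n" for z
  proof -
    define c where "c = p ^ count_list z 2 * (1-p) ^ (n - count_list z 2) / (card msgs * card C)"
    have "c \<ge> 0" using assms by (simp add: c_def)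
    have "\<bar>joint_MZ p n C msgs enc m z - 1 / card msgs * marg_Z p n C msgs enc z\<bar>
        = c * \<bar>consistent_count m z - 2 ^ count_list z 2 / card msgs\<bar>" if "m \<in> msgs" for m
    proof -
      have "joint_MZ p n C msgs enc m z - 1 / card msgs * marg_Z p n C msgs enc z
          = c * (consistent_count m z - 2 ^ count_list z 2 / card msgs)"
        unfolding joint_MZ_eq[OF that z] marg_Z_eq[OF z] c_def[symmetric] by (simp add: right_diff_distrib)
      then show ?thesis using \<open>c \<ge> 0\<close> by (simp add: abs_mult)
    qed
    then show ?thesis unfolding c_def by (simp add: sum_distrib_left)
  qed
  moreover have "tv_leak p n C msgs enc = (\<Sum>z\<in>out_words n. 1 / 2 *
      (\<Sum>m\<in>msgs. \<bar>joint_MZ p n C msgs enc m z - 1 / card msgs * marg_Z p n C msgs enc z\<bar>))"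
    unfolding tv_leak_def by (subst sum.swap) (simp add: sum_distrib_left)
  ultimately show ?thesis by (simp add: mult_ac)
qed
end

locale mds_coset_scheme = coset_scheme +
  fixes k :: nat
  assumes card_code: "card C = 2 ^ (n - k)"
    and mds: "min_dist n C = k + 1"
begin

lemma sum_abs_dev_consistent_count:
  assumes z: "z \<in> out_words n"
  shows "(\<Sum>m\<in>msgs. \<bar>consistent_count m z - 2 ^ count_list z 2 / card msgs\<bar>)
    = (if count_list z 2 < k then 2 * 2 ^ count_list z 2 * (1 - 2 ^ count_list z 2 / card msgs) else 0)"
proof (cases "count_list z 2 < k")
  case True
  have "consistent_count m z = 0 \<or> consistent_count m z = 1" if m: "m \<in> msgs" for m
  proof -
    obtain a where a: "a \<in> bin_words n" "enc m = coset C a" using enc_coset[OF m] .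
    have "consistent_count m z \<le> 1"
      using card_consistent_coset_le_1[OF code a(1) z] True mds a(2) by (simp add: consistent_count_def)
    then show ?thesis by linarith
  qed
  then show ?thesis
    using sum_abs_dev_indicator[OF finite_msgs _ msgs_nonempty, of "\<lambda>m. real (consistent_count m z)"]
      sum_consistent_count[OF z] True by (simp flip: of_nat_sum)
next
  case False
  have "consistent_count m z = 2 ^ count_list z 2 / card msgs" if m: "m \<in> msgs" for m
  proof -
    have "consistent_count m' z = consistent_count m z" if m': "m' \<in> msgs" for m'
    proof -
      obtain a where a: "a \<in> bin_words n" "enc m = coset C a" using enc_coset[OF m] .
      obtain b where b: "b \<in> bin_words n" "enc m' = coset C b" using enc_coset[OF m'] .
      show ?thesis using card_consistent_coset_indep[OF code mds card_code b(1) a(1) z] False a b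
        unfolding consistent_count_def by simp
    qed
    then have "real (2 ^ count_list z 2) = real (card msgs * consistent_count m z)"
      using sum_consistent_count[OF z] by simp
    moreover have "card msgs > 0" using msgs_nonempty finite_msgs by (simp add: card_gt_0_iff)
    ultimately show ?thesis by (simp add: field_simps)
  qed
  then show ?thesis using False by simp
qed


lemma tv_leak_eq_erasure_sum:
  assumes "0 \<le> p" "p \<le> 1" "card msgs = 2 ^ k" "k \<le> n"
  shows "tv_leak p n C msgs enc = (\<Sum>z\<in>out_words n. if count_list z 2 < k
    then (1 - 1 / 2 ^ (k - count_list z 2)) * p ^ count_list z 2 * (1 - p) ^ (n - count_list z 2)
      / 2 ^ (n - count_list z 2)
    else 0)"
proof -
  have "p ^ e * (1 - p) ^ (n - e) / (card msgs * card C) / 2 *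
      (if e < k then 2 * 2 ^ e * (1 - 2 ^ e / card msgs) else 0)
    = (if e < k then (1 - 1 / 2 ^ (k - e)) * p ^ e * (1 - p) ^ (n - e) / 2 ^ (n - e) else 0)" for e
  proof (cases "e < k")
    case True
    have "(2::real) ^ k = 2 ^ e * 2 ^ (k - e)" "(2::real) ^ (n - e) = 2 ^ (k - e) * 2 ^ (n - k)"
      using True assms(4) by (simp_all flip: power_add)
    then show ?thesis using True unfolding assms(3) card_code by (simp add: field_simps)
  qed simp
  then show ?thesis
    unfolding tv_leak_eq[OF assms(1,2)]
    by (intro sum.cong refl) (simp only: sum_abs_dev_consistent_count)
qed
end

theorem theorem2:
  fixes p :: real and n k :: nat and C0 :: "nat list set"
    and msgs :: "'m set" and enc :: "'m \<Rightarrow> nat list set"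
  assumes "0 \<le> p" and "p < 1"
    and "1 \<le> k" and "k \<le> n"
    and "binary_linear_code n C0"
    and "code_dim C0 (n - k)"
    and "min_dist n C0 = k + 1"
    and "finite msgs" and "card msgs = 2 ^ k"
    and "bij_betw enc msgs (cosets n C0)"
  shows "tv_leak p n C0 msgs enc =
    (\<Sum>e=0..k-1. (1 - 1 / 2 ^ (k - e)) * real (n choose e) * p ^ e * (1 - p) ^ (n - e))"
proof -
  interpret mds_coset_scheme n C0 msgs enc k
    using assms by unfold_locales (simp_all add: code_dim_def)
  define g where "g e = (if e < k then (1 - 1 / 2 ^ (k - e)) * p ^ e * (1 - p) ^ (n - e) / 2 ^ (n - e)
    else 0)" for e :: nat
  have "tv_leak p n C0 msgs enc = (\<Sum>z\<in>out_words n. g (count_list z 2))"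
    unfolding tv_leak_eq_erasure_sum[OF assms(1) less_imp_le[OF assms(2)] assms(9,4)] g_def ..
  also have "\<dots> = (\<Sum>e\<le>n. real (n choose e) * 2^(n-e) * g e)"
    by (rule sum_out_words_count_list)
  also have "\<dots> = (\<Sum>e\<le>n. if e < k then (1 - 1 / 2 ^ (k - e)) * real (n choose e) * p ^ e * (1 - p) ^ (n - e)
      else 0)"
    by (rule sum.cong[OF refl]) (simp add: g_def field_simps)
  also have "\<dots> = (\<Sum>e\<in>{..n} \<inter> {e. e < k}. (1 - 1 / 2 ^ (k - e)) * real (n choose e) * p ^ e * (1 - p) ^ (n - e))"
    by (simp add: sum.inter_restrict)
  also have "{..n} \<inter> {e. e < k} = {0..k-1}" using assms(3,4) by auto
  finally show ?thesis .
qed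

end
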